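(* Let $\mu$ be a partition of $k$ with $\ell(\mu)$ parts, $(S_1,S_2)$ a couple of pair-partitions of $[2k]$ of type $\mu$, and $G$ the group defined in the context. For each orbit $\Omega$ of the set of pair-partitions of $[2k]$ under the action of $G$ and any $S_0\in\Omega$, the quantity $\frac{2^{|\mathcal{L}(S_0,S_1)|}}{2^{\ell(\mu)}}\,|\Omega|$ is an integer.
   Context: Pair-partitions of $[2k]$ are sets of disjoint two-element subsets with union $[2k]$, identified with fixed-point-free involutions; $\sigma\in\mathfrak{S}_{2k}$ acts by: $\{\sigma(i),\sigma(j)\}\in\sigma\cdot P$ iff $\{i,j\}\in P$. $\mathcal{L}(A,B)$ is the bipartite graph with a black vertex per pair of $A$, a white vertex per pair of $B$, and an edge labeled $i$ for each $i\in[2k]$ joining the pairs containing $i$; it is a disjoint union of loops of lengths $2\ell_1\ge2\ell_2\ge\cdots$, $(\ell_1,\ell_2,\dots)$ is the type of $(A,B)$ and $|\mathcal{L}(A,B)|$ the number of loops. The group $G$: for each loop $L_i$ of $\mathcal{L}(S_1,S_2)$ (length $2\mu_i$) choose $j_{i,1}\in L_i$ and set $j_{i,2}=S_2(j_{i,1})$, $j_{i,3}=S_1(j_{i,2})$, $j_{i,4}=S_2(j_{i,3})$, alternately up to $j_{i,2\mu_i}$; let $r_i\in\mathfrak{S}_{2k}$ send $j_{i,m}$ to $j_{i,2\mu_i+1-m}$ for $m\in[2\mu_i]$ and fix all other elements; $G$ is the group generated by the $r_i$. *)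

theory Defs
  imports Complex_Main "HOL-Algebra.Sym_Groups" "HOL-Algebra.Generated_Groups" "HOL-Library.Multiset"
begin

text \<open>Pair-partitions of [2k], identified with fixed-point-free involutions of {1..2k}
  (extended by the identity outside {1..2k}).\<close>
definition pair_partition :: "nat \<Rightarrow> (nat \<Rightarrow> nat) \<Rightarrow> bool" where
  "pair_partition k P \<longleftrightarrow> P permutes {1..2*k} \<and> (\<forall>i\<in>{1..2*k}. P i \<noteq> i \<and> P (P i) = i)"

text \<open>Action of a permutation: {sigma i, sigma j} in sigma.P iff {i,j} in P.\<close>
definition pp_act :: "(nat \<Rightarrow> nat) \<Rightarrow> (nat \<Rightarrow> nat) \<Rightarrow> (nat \<Rightarrow> nat)" where
  "pp_act \<sigma> P = \<sigma> \<circ> P \<circ> Hilbert_Choice.inv \<sigma>"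

text \<open>Edges of the graph L(A,B) are labelled by [2k]; two labels are in the same loop
  iff they are connected via the pairs of A and B. Loops = sets of labels.\<close>
definition loop_edges :: "(nat \<Rightarrow> nat) \<Rightarrow> (nat \<Rightarrow> nat) \<Rightarrow> (nat \<times> nat) set" where
  "loop_edges A B = {(i, A i) | i. True} \<union> {(i, B i) | i. True}"

definition loops :: "nat \<Rightarrow> (nat \<Rightarrow> nat) \<Rightarrow> (nat \<Rightarrow> nat) \<Rightarrow> nat set set" where
  "loops k A B = {{j \<in> {1..2*k}. (i, j) \<in> (loop_edges A B)\<^sup>*} | i. i \<in> {1..2*k}}"

definition nloops :: "nat \<Rightarrow> (nat \<Rightarrow> nat) \<Rightarrow> (nat \<Rightarrow> nat) \<Rightarrow> nat" where
  "nloops k A B = card (loops k A B)"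

text \<open>Type of (A,B): multiset of half-lengths of loops (a loop with 2l labels has length 2l).\<close>
definition loop_type :: "nat \<Rightarrow> (nat \<Rightarrow> nat) \<Rightarrow> (nat \<Rightarrow> nat) \<Rightarrow> nat multiset" where
  "loop_type k A B = image_mset (\<lambda>L. card L div 2) (mset_set (loops k A B))"

fun walk :: "(nat \<Rightarrow> nat) \<Rightarrow> (nat \<Rightarrow> nat) \<Rightarrow> nat \<Rightarrow> nat \<Rightarrow> nat" where
  "walk S1 S2 j 0 = j"
| "walk S1 S2 j (Suc 0) = j"
| "walk S1 S2 j (Suc (Suc m)) = (if odd (Suc m) then S2 else S1) (walk S1 S2 j (Suc m))"

definition loop_refl :: "(nat \<Rightarrow> nat) \<Rightarrow> (nat \<Rightarrow> nat) \<Rightarrow> nat set \<Rightarrow> nat \<Rightarrow> nat \<Rightarrow> nat" where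
  "loop_refl S1 S2 L j x =
     (if \<exists>m\<in>{1..card L}. walk S1 S2 j m = x
      then walk S1 S2 j (card L + 1 - (THE m. m \<in> {1..card L} \<and> walk S1 S2 j m = x))
      else x)"

text \<open>The group G generated by the r_i, for a choice c of starting label in each loop.\<close>
definition Ggroup :: "nat \<Rightarrow> (nat \<Rightarrow> nat) \<Rightarrow> (nat \<Rightarrow> nat) \<Rightarrow> (nat set \<Rightarrow> nat) \<Rightarrow> (nat \<Rightarrow> nat) set" where
  "Ggroup k S1 S2 c = generate (sym_group (2*k)) ((\<lambda>L. loop_refl S1 S2 L (c L)) ` loops k S1 S2)"

definition G_orbit :: "(nat \<Rightarrow> nat) set \<Rightarrow> (nat \<Rightarrow> nat) \<Rightarrow> (nat \<Rightarrow> nat) set" where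
  "G_orbit G S0 = {pp_act \<sigma> S0 | \<sigma>. \<sigma> \<in> G}"

end

theory Submission
  imports Defs "HOL-Computational_Algebra.Primes"
begin

text \<open>Each loop of \<open>\<L>(S\<^sub>1,S\<^sub>2)\<close> has even length, and its reflection \<open>r\<^sub>i\<close> is a fixed-point-free
  involution of the loop. Hence the generators commute, every element of \<open>G\<close> is the product
  \<open>h\<^sub>I\<close> of the reflections of a set \<open>I\<close> of loops, and \<open>h\<^sub>I h\<^sub>J = h\<^bsub>I \<triangle> J\<^esub>\<close>. So \<open>|\<Omega>| \<cdot> |K| = 2\<^bsup>\<ell>(\<mu>)\<^esup>\<close>
  where \<open>K = {I. h\<^sub>I \<cdot> S\<^sub>0 = S\<^sub>0}\<close>, and \<open>|K|\<close> is a power of two. If \<open>h\<^sub>I\<close> fixes \<open>S\<^sub>0\<close>, the set moved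
  by \<open>h\<^sub>I\<close>, i.e. the union of the loops in \<open>I\<close>, is closed under \<open>S\<^sub>0\<close> and \<open>S\<^sub>1\<close>, hence a union
  of loops of \<open>\<L>(S\<^sub>0,S\<^sub>1)\<close>; this embeds \<open>K\<close> into the power set of those loops, so
  \<open>|K| \<le> 2\<^bsup>|\<L>(S\<^sub>0,S\<^sub>1)|\<^esup>\<close>.\<close>

section \<open>Pair-partitions and their loops\<close>

lemma pair_partition_maps_into: "pair_partition k S \<Longrightarrow> x \<in> {1..2*k} \<Longrightarrow> S x \<in> {1..2*k}"
  unfolding pair_partition_def using permutes_in_image by metis

lemma pair_partition_no_fixpoint: "pair_partition k S \<Longrightarrow> x \<in> {1..2*k} \<Longrightarrow> S x \<noteq> x"
  unfolding pair_partition_def by auto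

lemma pair_partition_involutive: "pair_partition k S \<Longrightarrow> S (S x) = x"
  unfolding pair_partition_def by (metis permutes_not_in)

definition loop_through :: "nat \<Rightarrow> (nat \<Rightarrow> nat) \<Rightarrow> (nat \<Rightarrow> nat) \<Rightarrow> nat \<Rightarrow> nat set" where
  "loop_through k A B x = {j \<in> {1..2*k}. (x, j) \<in> (loop_edges A B)\<^sup>*}"

lemma loops_eq_image_loop_through: "loops k A B = loop_through k A B ` {1..2*k}"
  unfolding loops_def loop_through_def by auto

lemma finite_loops: "finite (loops k A B)"
  unfolding loops_eq_image_loop_through by simp

lemma loop_through_self: "x \<in> {1..2*k} \<Longrightarrow> x \<in> loop_through k A B x"
  unfolding loop_through_def by auto

lemma loop_through_subset: "loop_through k A B x \<subseteq> {1..2*k}"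
  unfolding loop_through_def by auto

lemma loop_through_least:
  assumes "x \<in> U" and closed: "\<forall>z\<in>U. A z \<in> U \<and> B z \<in> U"
  shows "loop_through k A B x \<subseteq> U"
proof -
  have "y \<in> U" if "(x, y) \<in> (loop_edges A B)\<^sup>*" for y
    using that \<open>x \<in> U\<close>
    by (induction rule: rtrancl_induct) (use closed in \<open>auto simp: loop_edges_def\<close>)
  then show ?thesis unfolding loop_through_def by auto
qed

lemma sym_loop_edges:
  assumes "pair_partition k A" "pair_partition k B"
  shows "sym (loop_edges A B)"
proof (rule symI)
  fix a b assume "(a, b) \<in> loop_edges A B"
  then have "a = A b \<and> b = A a \<or> a = B b \<and> b = B a"
    unfolding loop_edges_def
    using pair_partition_involutive[OF assms(1)] pair_partition_involutive[OF assms(2)] by auto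
  then show "(b, a) \<in> loop_edges A B" unfolding loop_edges_def by auto
qed

lemma loop_through_eq:
  assumes "pair_partition k A" "pair_partition k B" "y \<in> loop_through k A B x"
  shows "loop_through k A B y = loop_through k A B x"
proof -
  have "sym ((loop_edges A B)\<^sup>*)" using sym_rtrancl sym_loop_edges assms(1,2) by blast
  moreover have xy: "(x, y) \<in> (loop_edges A B)\<^sup>*" using assms(3) unfolding loop_through_def by auto
  ultimately have "(y, x) \<in> (loop_edges A B)\<^sup>*" unfolding sym_def by blast
  with xy show ?thesis unfolding loop_through_def by (auto intro: rtrancl_trans)
qed

lemma loop_through_closed:
  assumes "pair_partition k A" "pair_partition k B" "y \<in> loop_through k A B x"
  shows "A y \<in> loop_through k A B x" "B y \<in> loop_through k A B x"
proof -
  have "(y, A y) \<in> loop_edges A B" "(y, B y) \<in> loop_edges A B" unfolding loop_edges_def by auto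
  then show "A y \<in> loop_through k A B x" "B y \<in> loop_through k A B x"
    using assms pair_partition_maps_into[OF assms(1)] pair_partition_maps_into[OF assms(2)]
    unfolding loop_through_def by (auto intro: rtrancl_into_rtrancl)
qed

lemma size_loop_type: "size (loop_type k A B) = card (loops k A B)"
  unfolding loop_type_def by (simp add: finite_loops)

section \<open>Walking along a loop\<close>

locale pair_partition_couple =
  fixes k :: nat and S1 S2 :: "nat \<Rightarrow> nat"
  assumes pp1: "pair_partition k S1" and pp2: "pair_partition k S2"
begin

definition step :: "nat \<Rightarrow> nat \<Rightarrow> nat" where
  "step m = (if odd m then S2 else S1)"

lemma step_involutive: "step m (step m x) = x"
  unfolding step_def using pair_partition_involutive[OF pp1] pair_partition_involutive[OF pp2] by auto

lemma step_maps_into: "x \<in> {1..2*k} \<Longrightarrow> step m x \<in> {1..2*k}"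
  unfolding step_def using pair_partition_maps_into[OF pp1] pair_partition_maps_into[OF pp2] by auto

lemma step_no_fixpoint: "x \<in> {1..2*k} \<Longrightarrow> step m x \<noteq> x"
  unfolding step_def using pair_partition_no_fixpoint[OF pp1] pair_partition_no_fixpoint[OF pp2] by auto

lemma step_cong_parity: "odd a = odd b \<Longrightarrow> step a = step b"
  unfolding step_def by auto

abbreviation trail :: "nat \<Rightarrow> nat \<Rightarrow> nat" where
  "trail j \<equiv> walk S1 S2 j"

lemma walk_Suc: "1 \<le> m \<Longrightarrow> trail j (Suc m) = step m (trail j m)"
  by (cases m) (auto simp: step_def)

lemma walk_Suc_back: "1 \<le> m \<Longrightarrow> trail j m = step m (trail j (Suc m))"
  using walk_Suc step_involutive by metis

lemma walk_maps_into: "j \<in> {1..2*k} \<Longrightarrow> trail j m \<in> {1..2*k}"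
proof (induction m)
  case (Suc m)
  then show ?case using walk_Suc[of m j] step_maps_into by (cases "m = 0") simp_all
qed simp

lemma walk_in_loop_through: "j \<in> {1..2*k} \<Longrightarrow> trail j m \<in> loop_through k S1 S2 j"
proof (induction m)
  case (Suc m)
  show ?case
  proof (cases "m = 0")
    case True
    then show ?thesis using Suc.prems loop_through_self by simp
  next
    case False
    then have "trail j (Suc m) = step m (trail j m)" using walk_Suc by simp
    moreover have "step m = S1 \<or> step m = S2" unfolding step_def by auto
    ultimately show ?thesis using loop_through_closed[OF pp1 pp2 Suc.IH[OF Suc.prems]] by metis
  qed
qed (simp add: loop_through_self)

lemma walk_shift_backward:
  assumes "1 \<le> a" "1 \<le> b" "odd a = odd b" "trail j a = trail j b" "t < a" "t < b"
  shows "trail j (a - t) = trail j (b - t)"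
  using assms(5,6)
proof (induction t)
  case (Suc t)
  have "Suc (a - Suc t) = a - t" "Suc (b - Suc t) = b - t" using Suc.prems by auto
  moreover have "step (a - Suc t) = step (b - Suc t)"
    using assms(3) Suc.prems by (intro step_cong_parity) auto
  ultimately show ?case
    using Suc walk_Suc_back[of "a - Suc t" j] walk_Suc_back[of "b - Suc t" j] by simp
qed (use assms in simp)

lemma walk_return_back_to_start:
  assumes "1 \<le> a" "a < b" "odd a = odd b" "trail j a = trail j b"
  shows "trail j (Suc (b - a)) = trail j 1"
  using walk_shift_backward[OF assms(1) _ assms(3,4), of "a - 1"] assms(1,2)
  by (simp add: Suc_diff_le)

text \<open>A repeated label is revisited after an even number of steps: otherwise, moving both
  visits one step inwards would give a repetition at closer times, until two consecutive
  labels agree, which is impossible since \<open>S\<^sub>1\<close> and \<open>S\<^sub>2\<close> have no fixed points.\<close>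

lemma walk_repeat_same_parity:
  assumes j: "j \<in> {1..2*k}"
  shows "1 \<le> a \<Longrightarrow> a < b \<Longrightarrow> trail j a = trail j b \<Longrightarrow> odd a = odd b"
proof (induction "b - a" arbitrary: a b rule: less_induct)
  case less
  show ?case
  proof (rule ccontr)
    assume parity: "odd a \<noteq> odd b"
    have next_a: "trail j (Suc a) = step a (trail j a)" using walk_Suc less.prems(1) by blast
    show False
    proof (cases "b = Suc a")
      case True
      then show False
        using next_a less.prems(3) step_no_fixpoint[OF walk_maps_into[OF j]] by metis
    next
      case False
      with parity less.prems(2) have inner: "Suc a < b - 1" by (cases "b = Suc (Suc a)") auto
      have "trail j (b - 1) = step (b - 1) (trail j b)" using walk_Suc_back[of "b - 1" j] inner by simp
      moreover have "step a = step (b - 1)" using parity inner by (intro step_cong_parity) auto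
      ultimately have "trail j (Suc a) = trail j (b - 1)" using next_a less.prems(3) by metis
      then have "odd (Suc a) = odd (b - 1)"
        using less.hyps[of "b - 1" "Suc a"] inner by auto
      then show False using parity inner by auto
    qed
  qed
qed

definition period :: "nat \<Rightarrow> nat" where
  "period j = (LEAST p. 0 < p \<and> trail j (Suc p) = trail j 1)"

lemma walk_returns:
  assumes j: "j \<in> {1..2*k}"
  shows "\<exists>p>0. trail j (Suc p) = trail j 1"
proof -
  have "\<not> inj_on (trail j) {1..Suc (2*k)}"
  proof
    assume "inj_on (trail j) {1..Suc (2*k)}"
    moreover have "trail j ` {1..Suc (2*k)} \<subseteq> {1..2*k}" using walk_maps_into[OF j] by auto
    ultimately show False using card_inj_on_le[of "trail j" "{1..Suc (2*k)}" "{1..2*k}"] by simp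
  qed
  then obtain a b where "1 \<le> a" "a < b" "trail j a = trail j b"
    unfolding inj_on_def by (metis atLeastAtMost_iff linorder_neqE_nat)
  with walk_repeat_same_parity[OF j] walk_return_back_to_start show ?thesis
    by (metis zero_less_diff)
qed

lemma period_pos: "j \<in> {1..2*k} \<Longrightarrow> 0 < period j"
  and walk_period: "j \<in> {1..2*k} \<Longrightarrow> trail j (Suc (period j)) = trail j 1"
  using LeastI_ex[OF walk_returns] unfolding period_def by blast+

lemma walk_not_return_before_period: "0 < p \<Longrightarrow> p < period j \<Longrightarrow> trail j (Suc p) \<noteq> trail j 1"
  unfolding period_def using not_less_Least by blast

lemma even_period: "j \<in> {1..2*k} \<Longrightarrow> even (period j)"
  using walk_repeat_same_parity[of j 1 "Suc (period j)"] period_pos walk_period by force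

lemma inj_on_walk:
  assumes j: "j \<in> {1..2*k}"
  shows "inj_on (trail j) {1..period j}"
proof -
  have "a = b" if "a \<in> {1..period j}" "b \<in> {1..period j}" "a \<le> b" "trail j a = trail j b" for a b
  proof (rule ccontr)
    assume "a \<noteq> b"
    with that have "odd a = odd b" using walk_repeat_same_parity[OF j] by auto
    then have "trail j (Suc (b - a)) = trail j 1"
      using walk_return_back_to_start that \<open>a \<noteq> b\<close> by auto
    with walk_not_return_before_period that \<open>a \<noteq> b\<close> show False by auto
  qed
  then show ?thesis unfolding inj_on_def by (metis nat_le_linear)
qed

lemma walk_image_step_closed:
  assumes j: "j \<in> {1..2*k}" and m: "m \<in> {1..period j}"
  shows "step m (trail j m) \<in> trail j ` {1..period j}"
    and "step (Suc m) (trail j m) \<in> trail j ` {1..period j}"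
proof -
  have P: "1 \<in> {1..period j}" "period j \<in> {1..period j}" using period_pos[OF j] by auto
  show "step m (trail j m) \<in> trail j ` {1..period j}"
  proof (cases "m = period j")
    case True
    then have "step m (trail j m) = trail j 1" using walk_Suc[of m j] walk_period[OF j] m by simp
    then show ?thesis using P(1) by (metis imageI)
  next
    case False
    then have "Suc m \<in> {1..period j}" using m by auto
    moreover have "step m (trail j m) = trail j (Suc m)" using walk_Suc[of m j] m by simp
    ultimately show ?thesis by (metis imageI)
  qed
  show "step (Suc m) (trail j m) \<in> trail j ` {1..period j}"
  proof (cases "m = 1")
    case True
    have "trail j (period j) = step (period j) (trail j (Suc (period j)))"
      using walk_Suc_back[of "period j" j] period_pos[OF j] by simp
    also have "\<dots> = step (Suc m) (trail j m)"
      using walk_period[OF j] True even_period[OF j] by (simp add: step_def)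
    finally show ?thesis using P(2) by (metis imageI)
  next
    case False
    then have "2 \<le> m" using m by auto
    then have "trail j (m - 1) = step (m - 1) (trail j m)" using walk_Suc_back[of "m - 1" j] by simp
    moreover have "step (m - 1) = step (Suc m)" using m False by (intro step_cong_parity) auto
    moreover have "m - 1 \<in> {1..period j}" using m False by auto
    ultimately show ?thesis by (metis imageI)
  qed
qed

lemma walk_image_eq_loop_through:
  assumes j: "j \<in> {1..2*k}"
  shows "trail j ` {1..period j} = loop_through k S1 S2 j"
proof
  show "trail j ` {1..period j} \<subseteq> loop_through k S1 S2 j"
    using walk_in_loop_through[OF j] by auto
next
  let ?W = "trail j ` {1..period j}"
  have "S1 x \<in> ?W \<and> S2 x \<in> ?W" if x: "x \<in> ?W" for x
  proof -
    obtain m where "m \<in> {1..period j}" "x = trail j m" using x by blast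
    then have "{step m x, step (Suc m) x} \<subseteq> ?W" using walk_image_step_closed[OF j] by blast
    moreover have "{step m x, step (Suc m) x} = {S1 x, S2 x}" unfolding step_def by auto
    ultimately show ?thesis by simp
  qed
  moreover have "j \<in> ?W" using period_pos[OF j] by (intro image_eqI[of _ _ 1]) auto
  ultimately show "loop_through k S1 S2 j \<subseteq> ?W" by (intro loop_through_least) auto
qed

lemma card_loop_through: "j \<in> {1..2*k} \<Longrightarrow> card (loop_through k S1 S2 j) = period j"
  using card_image[OF inj_on_walk] walk_image_eq_loop_through by fastforce

definition reflection_at :: "nat \<Rightarrow> nat \<Rightarrow> nat" where
  "reflection_at j = loop_refl S1 S2 (loop_through k S1 S2 j) j"

lemma reflection_at_walk:
  assumes j: "j \<in> {1..2*k}" and m: "m \<in> {1..period j}"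
  shows "reflection_at j (trail j m) = trail j (period j + 1 - m)"
proof -
  have card: "card (loop_through k S1 S2 j) = period j" using card_loop_through[OF j] .
  have "(THE m'. m' \<in> {1..period j} \<and> trail j m' = trail j m) = m"
    using m inj_on_walk[OF j] by (auto intro!: the_equality dest: inj_onD)
  moreover have "\<exists>m'\<in>{1..period j}. trail j m' = trail j m" using m by blast
  ultimately show ?thesis unfolding reflection_at_def loop_refl_def card by simp
qed

lemma reflection_at_outside:
  "j \<in> {1..2*k} \<Longrightarrow> x \<notin> loop_through k S1 S2 j \<Longrightarrow> reflection_at j x = x"
  unfolding reflection_at_def loop_refl_def
  using walk_image_eq_loop_through card_loop_through by auto

lemma reflection_at_inside:
  assumes j: "j \<in> {1..2*k}" and x: "x \<in> loop_through k S1 S2 j"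
  shows "reflection_at j x \<in> loop_through k S1 S2 j"
    and "reflection_at j (reflection_at j x) = x"
    and "reflection_at j x \<noteq> x"
proof -
  obtain m where m: "m \<in> {1..period j}" "x = trail j m"
    using x walk_image_eq_loop_through[OF j] by blast
  have m': "period j + 1 - m \<in> {1..period j}" using m by auto
  have rx: "reflection_at j x = trail j (period j + 1 - m)" using reflection_at_walk[OF j m(1)] m(2) by simp
  show "reflection_at j x \<in> loop_through k S1 S2 j"
    using rx m' walk_image_eq_loop_through[OF j] by blast
  show "reflection_at j (reflection_at j x) = x"
    using rx reflection_at_walk[OF j m'] m by simp
  show "reflection_at j x \<noteq> x"
  proof
    assume "reflection_at j x = x"
    then have "period j + 1 - m = m"
      using rx m m' inj_on_walk[OF j] unfolding inj_on_def by metis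
    then show False using m(1) even_period[OF j] by (simp, elim evenE, presburger)
  qed
qed

end

section \<open>Products of loop reflections\<close>

text \<open>Orbit-stabiliser for the group \<open>Pow A\<close> under symmetric difference: \<open>Q\<close> describes the stabiliser of a point
  whose orbit map is \<open>F\<close>, and every fibre of \<open>F\<close> is a translate of the stabiliser.\<close>

lemma card_image_mult_card_sym_diff_kernel:
  fixes F :: "'a set \<Rightarrow> 'b" and Q :: "'a set \<Rightarrow> bool"
  assumes "finite A"
    and fiber: "\<And>I J. I \<subseteq> A \<Longrightarrow> J \<subseteq> A \<Longrightarrow> F J = F I \<longleftrightarrow> Q (sym_diff I J)"
  shows "card (F ` Pow A) * card {D \<in> Pow A. Q D} = 2 ^ card A"
proof -
  let ?K = "{D \<in> Pow A. Q D}"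
  have "card {J \<in> Pow A. F J = F I} = card ?K" if I: "I \<subseteq> A" for I
  proof (rule bij_betw_same_card)
    have sym_diff_sym_diff: "sym_diff I (sym_diff I J) = J" for J
      by blast
    show "bij_betw (\<lambda>J. sym_diff I J) {J \<in> Pow A. F J = F I} ?K"
    proof (rule bij_betw_byWitness[where f' = "\<lambda>J. sym_diff I J"])
      show "(\<lambda>J. sym_diff I J) ` {J \<in> Pow A. F J = F I} \<subseteq> ?K"
        using I fiber by auto
      show "(\<lambda>J. sym_diff I J) ` ?K \<subseteq> {J \<in> Pow A. F J = F I}"
      proof (rule image_subsetI)
        fix D assume D: "D \<in> ?K"
        then have "sym_diff I D \<subseteq> A" using I by auto
        then show "sym_diff I D \<in> {J \<in> Pow A. F J = F I}"
          using fiber[OF I] D sym_diff_sym_diff by auto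
      qed
    qed (use sym_diff_sym_diff in auto)
  qed
  then have "(\<Sum>y\<in>F ` Pow A. card {J \<in> Pow A. F J = y}) = (\<Sum>y\<in>F ` Pow A. card ?K)"
    by (intro sum.cong) auto
  moreover have "(\<Sum>y\<in>F ` Pow A. \<Sum>J\<in>{J \<in> Pow A. F J = y}. 1) = (\<Sum>J\<in>Pow A. 1::nat)"
    using \<open>finite A\<close> by (intro sum.image_gen[symmetric]) simp
  ultimately show ?thesis using \<open>finite A\<close> by (simp add: card_Pow)
qed

locale loop_reflections = pair_partition_couple +
  fixes c :: "nat set \<Rightarrow> nat"
  assumes c_in_loop: "\<forall>L \<in> loops k S1 S2. c L \<in> L"
begin

abbreviation \<Lambda> :: "nat set set" where
  "\<Lambda> \<equiv> loops k S1 S2"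

abbreviation loop_of :: "nat \<Rightarrow> nat set" where
  "loop_of \<equiv> loop_through k S1 S2"

definition reflection :: "nat set \<Rightarrow> nat \<Rightarrow> nat" where
  "reflection L = loop_refl S1 S2 L (c L)"

lemma loops_subset: "L \<in> \<Lambda> \<Longrightarrow> L \<subseteq> {1..2*k}"
  unfolding loops_eq_image_loop_through using loop_through_subset by blast

lemma loop_of_in_loops: "x \<in> {1..2*k} \<Longrightarrow> loop_of x \<in> \<Lambda>"
  unfolding loops_eq_image_loop_through by blast

lemma loop_of_eq: "L \<in> \<Lambda> \<Longrightarrow> x \<in> L \<Longrightarrow> loop_of x = L"
  unfolding loops_eq_image_loop_through using loop_through_eq[OF pp1 pp2] by blast

lemma reflection_eq_reflection_at: "L \<in> \<Lambda> \<Longrightarrow> reflection L = reflection_at (c L)"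
  unfolding reflection_def reflection_at_def using c_in_loop loop_of_eq by metis

lemma reflection_outside: "L \<in> \<Lambda> \<Longrightarrow> x \<notin> L \<Longrightarrow> reflection L x = x"
  using reflection_eq_reflection_at reflection_at_outside c_in_loop loops_subset loop_of_eq
  by (metis subsetD)

lemma reflection_inside:
  assumes "L \<in> \<Lambda>" "x \<in> L"
  shows "reflection L x \<in> L" "reflection L (reflection L x) = x" "reflection L x \<noteq> x"
proof -
  have "c L \<in> {1..2*k}" "loop_of (c L) = L"
    using c_in_loop loops_subset loop_of_eq assms(1) by blast+
  then show "reflection L x \<in> L" "reflection L (reflection L x) = x" "reflection L x \<noteq> x"
    using reflection_at_inside[of "c L" x] reflection_eq_reflection_at[OF assms(1)] assms(2)
    by simp_all
qed

text \<open>\<open>reflect I\<close> is the element \<open>h\<^sub>I\<close> of \<open>G\<close>, the product of the reflections of the loops in \<open>I\<close>.\<close>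

definition reflect :: "nat set set \<Rightarrow> nat \<Rightarrow> nat" where
  "reflect I x = (if x \<in> {1..2*k} \<and> loop_of x \<in> I then reflection (loop_of x) x else x)"

lemma reflect_reflect: "reflect I (reflect J x) = reflect (sym_diff I J) x"
proof (cases "x \<in> {1..2*k}")
  case True
  define L where "L = loop_of x"
  have L: "L \<in> \<Lambda>" "x \<in> L" using True loop_of_in_loops loop_through_self unfolding L_def by auto
  have "reflection L x \<in> {1..2*k}" "loop_of (reflection L x) = L"
    using reflection_inside(1)[OF L] loops_subset[OF L(1)] loop_of_eq[OF L(1)] by auto
  then show ?thesis
    using True reflection_inside(2)[OF L] L_def unfolding reflect_def
    by (cases "L \<in> I"; cases "L \<in> J") simp_all
qed (auto simp: reflect_def)

lemma reflect_empty: "reflect {} = id"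
  unfolding reflect_def by auto

lemma reflect_involutive: "reflect I (reflect I x) = x"
  using reflect_reflect[of I I x] reflect_empty by simp

lemma reflect_comp: "reflect I \<circ> reflect J = reflect (sym_diff I J)"
  using reflect_reflect by (simp add: fun_eq_iff)

lemma inv_reflect: "Hilbert_Choice.inv (reflect I) = reflect I"
  by (rule inv_unique_comp) (simp_all add: fun_eq_iff reflect_involutive)

lemma reflect_permutes: "reflect I permutes {1..2*k}"
proof (rule bij_imp_permutes)
  have "reflect I x \<in> {1..2*k}" if x: "x \<in> {1..2*k}" for x
  proof -
    have "reflection (loop_of x) x \<in> loop_of x"
      using reflection_inside(1)[OF loop_of_in_loops[OF x] loop_through_self[OF x]] .
    then have "reflection (loop_of x) x \<in> {1..2*k}" using loop_through_subset by blast
    then show ?thesis using x unfolding reflect_def by auto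
  qed
  then show "bij_betw (reflect I) {1..2*k} {1..2*k}"
    by (intro bij_betw_byWitness[where f' = "reflect I"]) (auto simp: reflect_involutive)
qed (auto simp: reflect_def)

lemma reflect_singleton:
  assumes L: "L \<in> \<Lambda>"
  shows "reflect {L} = reflection L"
proof
  fix x
  show "reflect {L} x = reflection L x"
  proof (cases "x \<in> L")
    case True
    then show ?thesis using loops_subset[OF L] loop_of_eq[OF L] unfolding reflect_def by auto
  next
    case False
    then have "x \<in> {1..2*k} \<Longrightarrow> loop_of x \<noteq> L" using loop_through_self by blast
    then show ?thesis using reflection_outside[OF L False] unfolding reflect_def by auto
  qed
qed

lemma reflect_moves_iff: "x \<in> {1..2*k} \<Longrightarrow> reflect I x \<noteq> x \<longleftrightarrow> loop_of x \<in> I"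
  unfolding reflect_def using reflection_inside(3) loop_of_in_loops loop_through_self by auto

lemma reflect_in_Ggroup: "I \<subseteq> \<Lambda> \<Longrightarrow> reflect I \<in> Ggroup k S1 S2 c"
proof (induction I rule: infinite_finite_induct)
  case (infinite I)
  then show ?case using finite_loops finite_subset by blast
next
  case empty
  have "\<one>\<^bsub>sym_group (2*k)\<^esub> \<in> Ggroup k S1 S2 c" unfolding Ggroup_def by (rule generate.one)
  then show ?case by (simp only: sym_group_one reflect_empty)
next
  case (insert L I)
  have "reflection L \<in> Ggroup k S1 S2 c"
    unfolding Ggroup_def reflection_def using insert.prems by (intro generate.incl) blast
  then have "reflection L \<otimes>\<^bsub>sym_group (2*k)\<^esub> reflect I \<in> Ggroup k S1 S2 c"
    using insert unfolding Ggroup_def by (intro generate.eng) auto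
  moreover have "reflection L \<circ> reflect I = reflect (insert L I)"
    using reflect_comp[of "{L}" I] reflect_singleton insert by (simp add: insert_Diff_if)
  ultimately show ?case by (simp add: sym_group_mult)
qed

lemma Ggroup_eq: "Ggroup k S1 S2 c = reflect ` Pow \<Lambda>"
proof
  show "Ggroup k S1 S2 c \<subseteq> reflect ` Pow \<Lambda>"
  proof
    fix g assume "g \<in> Ggroup k S1 S2 c"
    then show "g \<in> reflect ` Pow \<Lambda>"
      unfolding Ggroup_def
    proof (induction rule: generate.induct)
      case one
      show ?case using reflect_empty by (metis Pow_bottom image_eqI sym_group_one)
    next
      case (incl h)
      then obtain L where "L \<in> \<Lambda>" "h = reflect {L}"
        using reflect_singleton unfolding reflection_def by auto
      then show ?case by blast
    next
      case (inv h)
      then obtain L where L: "L \<in> \<Lambda>" "h = reflect {L}"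
        using reflect_singleton unfolding reflection_def by auto
      then have "inv\<^bsub>sym_group (2*k)\<^esub> h = h"
        using reflect_permutes inv_reflect by (simp add: sym_group_carrier)
      then show ?case using L by auto
    next
      case (eng h1 h2)
      then obtain I J where "I \<subseteq> \<Lambda>" "J \<subseteq> \<Lambda>" "h1 = reflect I" "h2 = reflect J" by blast
      then have "h1 \<otimes>\<^bsub>sym_group (2*k)\<^esub> h2 = reflect (sym_diff I J)" "sym_diff I J \<subseteq> \<Lambda>"
        using reflect_comp by (auto simp: sym_group_mult)
      then show ?case by blast
    qed
  qed
  show "reflect ` Pow \<Lambda> \<subseteq> Ggroup k S1 S2 c"
    using reflect_in_Ggroup by blast
qed

definition conj_reflect :: "(nat \<Rightarrow> nat) \<Rightarrow> nat set set \<Rightarrow> nat \<Rightarrow> nat" where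
  "conj_reflect S0 I = reflect I \<circ> S0 \<circ> reflect I"

lemma G_orbit_eq: "G_orbit (Ggroup k S1 S2 c) S0 = conj_reflect S0 ` Pow \<Lambda>"
  unfolding G_orbit_def Ggroup_eq pp_act_def conj_reflect_def Setcompr_eq_image image_image inv_reflect ..

lemma conj_reflect_eq_iff:
  "conj_reflect S0 J = conj_reflect S0 I \<longleftrightarrow> conj_reflect S0 (sym_diff I J) = S0"
proof -
  have "reflect (sym_diff I J) = reflect I \<circ> reflect J" "reflect (sym_diff I J) = reflect J \<circ> reflect I"
    using reflect_comp[of I J] reflect_comp[of J I] by (simp_all add: Un_commute)
  then have "conj_reflect S0 (sym_diff I J) = reflect I \<circ> conj_reflect S0 J \<circ> reflect I"
    unfolding conj_reflect_def by (metis comp_assoc)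
  moreover have "reflect I \<circ> (reflect I \<circ> X \<circ> reflect I) \<circ> reflect I = X" for X
    by (simp add: fun_eq_iff reflect_involutive)
  ultimately show ?thesis unfolding conj_reflect_def by metis
qed

lemma stabilizer_support_closed:
  assumes S0: "pair_partition k S0" and D: "D \<subseteq> \<Lambda>" "conj_reflect S0 D = S0"
    and x: "x \<in> \<Union>D"
  shows "S0 x \<in> \<Union>D" "S1 x \<in> \<Union>D"
proof -
  obtain L where L: "L \<in> D" "x \<in> L" using x by blast
  then have "L \<in> \<Lambda>" using D by blast
  then have x_range: "x \<in> {1..2*k}" and loop_x: "loop_of x = L"
    using loops_subset loop_of_eq L by blast+
  show "S1 x \<in> \<Union>D"
    using loop_through_closed(1)[OF pp1 pp2 loop_through_self[OF x_range]] loop_x L by blast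
  show "S0 x \<in> \<Union>D"
  proof (rule ccontr)
    assume "S0 x \<notin> \<Union>D"
    moreover have "S0 x \<in> {1..2*k}" using pair_partition_maps_into[OF S0 x_range] .
    ultimately have "reflect D (S0 x) = S0 x"
      using reflect_moves_iff loop_through_self by blast
    moreover have "reflect D (S0 x) = S0 (reflect D x)"
      using D(2) reflect_involutive unfolding conj_reflect_def by (metis comp_apply)
    ultimately have "reflect D x = x" using pair_partition_involutive[OF S0] by metis
    then show False using reflect_moves_iff[OF x_range] loop_x L by blast
  qed
qed

lemma inj_on_Union_loops: "inj_on Union (Pow \<Lambda>)"
proof -
  have "D \<subseteq> D'" if "D \<subseteq> \<Lambda>" "D' \<subseteq> \<Lambda>" "\<Union>D \<subseteq> \<Union>D'" for D D'
  proof
    fix L assume "L \<in> D"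
    then have "L \<in> \<Lambda>" "c L \<in> \<Union>D'" using that c_in_loop by blast+
    then obtain L' where "L' \<in> D'" "c L \<in> L'" by blast
    then show "L \<in> D'"
      using loop_of_eq[of L "c L"] loop_of_eq[of L' "c L"] \<open>L \<in> \<Lambda>\<close> c_in_loop that(2) by auto
  qed
  then show ?thesis by (intro inj_onI) (simp add: subset_antisym)
qed

lemma card_stabilizer_le:
  assumes S0: "pair_partition k S0"
  shows "card {D \<in> Pow \<Lambda>. conj_reflect S0 D = S0} \<le> 2 ^ nloops k S0 S1"
proof -
  let ?K = "{D \<in> Pow \<Lambda>. conj_reflect S0 D = S0}"
  let ?M = "loops k S0 S1"
  have union_eq: "\<Union>{M \<in> ?M. M \<subseteq> \<Union>D} = \<Union>D" if D: "D \<in> ?K" for D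
  proof
    show "\<Union>D \<subseteq> \<Union>{M \<in> ?M. M \<subseteq> \<Union>D}"
    proof
      fix x assume x: "x \<in> \<Union>D"
      have D': "D \<subseteq> \<Lambda>" "conj_reflect S0 D = S0" using D by auto
      then have x_range: "x \<in> {1..2*k}" using x loops_subset by blast
      have "loop_through k S0 S1 x \<in> ?M"
        using x_range unfolding loops_eq_image_loop_through by (rule imageI)
      moreover have "loop_through k S0 S1 x \<subseteq> \<Union>D"
        using loop_through_least[OF x] stabilizer_support_closed[OF S0 D'] by blast
      ultimately show "x \<in> \<Union>{M \<in> ?M. M \<subseteq> \<Union>D}"
        using loop_through_self[OF x_range] by blast
    qed
  qed blast
  have "inj_on (\<lambda>D. {M \<in> ?M. M \<subseteq> \<Union>D}) ?K"
  proof (rule inj_onI)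
    fix D D' assume D: "D \<in> ?K" and D': "D' \<in> ?K"
      and same_loops: "{M \<in> ?M. M \<subseteq> \<Union>D} = {M \<in> ?M. M \<subseteq> \<Union>D'}"
    have "\<Union>D = \<Union>{M \<in> ?M. M \<subseteq> \<Union>D}" using union_eq[OF D] by (rule sym)
    also have "\<dots> = \<Union>D'" unfolding same_loops using union_eq[OF D'] .
    finally show "D = D'" using inj_on_Union_loops D D' by (auto dest: inj_onD)
  qed
  then have "card ?K \<le> card (Pow ?M)"
    using finite_loops by (intro card_inj_on_le) auto
  then show ?thesis unfolding nloops_def using finite_loops by (simp add: card_Pow)
qed

lemma card_orbit_mult_pow2:
  assumes S0: "pair_partition k S0"
  obtains s where "s \<le> nloops k S0 S1"
    and "card (G_orbit (Ggroup k S1 S2 c) S0) * 2 ^ s = 2 ^ card \<Lambda>"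
proof -
  let ?K = "{D \<in> Pow \<Lambda>. conj_reflect S0 D = S0}"
  have count: "card (G_orbit (Ggroup k S1 S2 c) S0) * card ?K = 2 ^ card \<Lambda>"
    unfolding G_orbit_eq using finite_loops conj_reflect_eq_iff
    by (rule card_image_mult_card_sym_diff_kernel)
  then have "card ?K dvd 2 ^ card \<Lambda>" by (metis dvd_triv_right)
  then obtain s where "card ?K = 2 ^ s"
    using divides_primepow_nat[OF two_is_prime_nat] by blast
  moreover from this have "s \<le> nloops k S0 S1"
    using card_stabilizer_le[OF S0] power_le_imp_le_exp[of "2::nat" s] by simp
  ultimately show ?thesis using that count by simp
qed

end

lemma pow2_div_mult_in_Ints:
  assumes "s \<le> n" "m * 2 ^ s = (2::nat) ^ l"
  shows "(2::rat) ^ n / 2 ^ l * of_nat m \<in> \<int>"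
proof -
  have "(2::rat) ^ l = of_nat m * 2 ^ s" using assms(2) by (metis of_nat_mult of_nat_numeral of_nat_power)
  moreover have "(2::rat) ^ n = 2 ^ (n - s) * 2 ^ s" using assms(1) by (simp add: power_add[symmetric])
  moreover have "m \<noteq> 0" using assms(2) by (metis mult_is_0 power_not_zero zero_neq_numeral)
  ultimately have "(2::rat) ^ n / 2 ^ l * of_nat m = of_int (2 ^ (n - s))" by simp
  then show ?thesis by (metis Ints_of_int)
qed

theorem lemma3p11:
  fixes k :: nat and \<mu> :: "nat multiset" and S0 S1 S2 :: "nat \<Rightarrow> nat" and c :: "nat set \<Rightarrow> nat"
  assumes "sum_mset \<mu> = k" and "0 \<notin># \<mu>"
    and "pair_partition k S1" and "pair_partition k S2"
    and "loop_type k S1 S2 = \<mu>"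
    and "\<forall>L \<in> loops k S1 S2. c L \<in> L"
    and "pair_partition k S0"
  shows "(2::rat) ^ nloops k S0 S1 / 2 ^ size \<mu> * of_nat (card (G_orbit (Ggroup k S1 S2 c) S0)) \<in> \<int>"
proof -
  \<comment> \<open>The first two hypotheses hold for any loop type.\<close>
  interpret loop_reflections k S1 S2 c
    using assms by unfold_locales auto
  obtain s where "s \<le> nloops k S0 S1"
    and "card (G_orbit (Ggroup k S1 S2 c) S0) * 2 ^ s = 2 ^ card (loops k S1 S2)"
    using card_orbit_mult_pow2[OF assms(7)] .
  moreover have "size \<mu> = card (loops k S1 S2)" using assms(5) size_loop_type by metis
  ultimately show ?thesis using pow2_div_mult_in_Ints by metis
qed

end
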